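(* Let $\mathbf{M}=\mathrm{diag}(\lambda_1,\dots,\lambda_N)$ with $\lambda_1>\lambda_2>\cdots>\lambda_r>\lambda_{r+1}\ge\cdots\ge\lambda_N\ge0$, and let $d_{\min}=\min_{1\le s<j\le r+1}(\lambda_s-\lambda_j)$. Let $\epsilon>0$ and $\mathbf{X}=[\bm{x}_1,\dots,\bm{x}_r]\in\mathrm{St}(N,r)$ with $\|\mathrm{grad}\,g(\mathbf{X})\|_F\le\epsilon$. For each $j\in[r]$ let $i_j\in[N]$ be an index minimizing $|\bm{x}_j^\top\mathbf{M}\bm{x}_j-\lambda_n|$ over $n\in[N]$, and set $\boldsymbol{\Lambda}_\Omega=\mathrm{diag}(\lambda_{i_1},\dots,\lambda_{i_r})$, $\mathbf{X}_\Omega=[\bm{e}_{i_1},\dots,\bm{e}_{i_r}]$. Then (i) $\|\mathbf{X}^\top\mathbf{M}\mathbf{X}-\boldsymbol{\Lambda}_\Omega\|_F\le4\epsilon$; (ii) if $(i_1,\dots,i_r)=(1,\dots,r)$, then there exist signs $s_1,\dots,s_r\in\{\pm1\}$ such that $\|\mathbf{X}-\mathbf{X}_\Omega\,\mathrm{diag}(s_1,\dots,s_r)\|_F\le 12\,d_{\min}^{-1}\epsilon$ (with $s_j=1$ whenever $\mathbf{X}(j,j)\ge0$).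
   Context: $\bm{e}_i$ is the $i$-th standard basis vector of $\mathbb{R}^N$. $\mathrm{St}(N,r)=\{\mathbf{X}\in\mathbb{R}^{N\times r}:\mathbf{X}^\top\mathbf{X}=\mathbf{I}_r\}$, $\mathbf{N}=\mathrm{diag}(r,r-1,\dots,1)$, $g(\mathbf{X})=-\tfrac12\mathrm{tr}(\mathbf{X}^\top\mathbf{M}\mathbf{X}\mathbf{N})$, with Riemannian gradient $\mathrm{grad}\,g(\mathbf{X})=(\mathbf{X}\mathbf{X}^\top-\mathbf{I}_N)\mathbf{M}\mathbf{X}\mathbf{N}-\tfrac12\mathbf{X}[\mathbf{X}^\top\mathbf{M}\mathbf{X},\mathbf{N}]$, where $[\mathbf{A},\mathbf{B}]=\mathbf{A}\mathbf{B}-\mathbf{B}\mathbf{A}$. *)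

theory Defs
  imports Complex_Main
begin

text \<open>Real matrices are represented as functions nat => nat => real; the dimensions
  are carried explicitly. Indices are 0-based: an m x n matrix has entries A i j with
  i < m, j < n.\<close>

type_synonym rmat = "nat \<Rightarrow> nat \<Rightarrow> real"

definition mat_mult :: "rmat \<Rightarrow> nat \<Rightarrow> rmat \<Rightarrow> rmat" where
  "mat_mult A k B = (\<lambda>i j. \<Sum>l<k. A i l * B l j)"

definition mat_transp :: "rmat \<Rightarrow> rmat" where
  "mat_transp A = (\<lambda>i j. A j i)"

definition mat_add :: "rmat \<Rightarrow> rmat \<Rightarrow> rmat" where
  "mat_add A B = (\<lambda>i j. A i j + B i j)"

definition mat_sub :: "rmat \<Rightarrow> rmat \<Rightarrow> rmat" where
  "mat_sub A B = (\<lambda>i j. A i j - B i j)"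

definition mat_scale :: "real \<Rightarrow> rmat \<Rightarrow> rmat" where
  "mat_scale c A = (\<lambda>i j. c * A i j)"

definition mat_diag :: "(nat \<Rightarrow> real) \<Rightarrow> rmat" where
  "mat_diag d = (\<lambda>i j. if i = j then d i else 0)"

definition mat_id :: rmat where
  "mat_id = mat_diag (\<lambda>_. 1)"

definition commutator :: "nat \<Rightarrow> rmat \<Rightarrow> rmat \<Rightarrow> rmat" where
  "commutator k A B = mat_sub (mat_mult A k B) (mat_mult B k A)"

definition frob :: "nat \<Rightarrow> nat \<Rightarrow> rmat \<Rightarrow> real" where
  "frob m n A = sqrt (\<Sum>i<m. \<Sum>j<n. (A i j)\<^sup>2)"

definition stiefel :: "nat \<Rightarrow> nat \<Rightarrow> rmat \<Rightarrow> bool" where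
  "stiefel N r X \<longleftrightarrow> (\<forall>j<r. \<forall>k<r. mat_mult (mat_transp X) N X j k = mat_id j k)"

definition std_basis :: "nat \<Rightarrow> nat \<Rightarrow> real" where
  "std_basis i = (\<lambda>k. if k = i then 1 else 0)"

definition Nmat :: "nat \<Rightarrow> rmat" where
  "Nmat r = mat_diag (\<lambda>j. real r - real j)"

text \<open>Riemannian gradient of g(X) = -1/2 tr(X^T M X N):
  grad g(X) = (X X^T - I_N) M X N - 1/2 X [X^T M X, N], an N x r matrix.\<close>
definition grad_g :: "nat \<Rightarrow> nat \<Rightarrow> rmat \<Rightarrow> rmat \<Rightarrow> rmat" where
  "grad_g N r M X =
     mat_sub
       (mat_mult (mat_mult (mat_mult (mat_sub (mat_mult X r (mat_transp X)) mat_id) N M) N X) r (Nmat r))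
       (mat_scale (1/2) (mat_mult X r (commutator r (mat_mult (mat_mult (mat_transp X) N M) N X) (Nmat r))))"

end

theory Submission
  imports Defs
begin

text \<open>Write A = X^T M X for the Rayleigh matrix and U = (I - X X^T) M X. The j-th column of
  grad g(X) is -(r - j) u_j - (1/2) sum_k (k - j) A_kj x_k with u_j orthogonal to the columns of X,
  so its squared norm is at least |u_j|^2 + (1/4) sum_(k ~= j) A_kj^2. The same orthogonality shows
  that the Ritz residual |M x_j - A_jj x_j|^2 equals |u_j|^2 + sum_(k ~= j) A_kj^2, so residuals and
  off-diagonal parts of A are controlled by 8 eps^2 in total. The residual is a weighted spread of
  the eigenvalues around A_jj; it dominates the squared distance from A_jj to the nearest eigenvalue,
  which gives (i), and, when that eigenvalue is lambda_j, the gap d_min forces all but a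
  (2/d_min)^2-fraction of the residual onto coordinate j, which gives (ii).\<close>

lemma mat_mult_diag_right: "j < k \<Longrightarrow> mat_mult P k (mat_diag d) i j = P i j * d j"
  by (simp add: mat_mult_def mat_diag_def if_distrib sum.delta cong: if_cong)

lemma mat_mult_diag_left:
  assumes "i < k"
  shows "mat_mult (mat_diag d) k P i j = d i * P i j"
proof -
  have "mat_mult (mat_diag d) k P i j = (\<Sum>l<k. if i = l then d i * P i j else 0)"
    unfolding mat_mult_def mat_diag_def by (rule sum.cong) auto
  with assms show ?thesis by simp
qed

lemma mat_mult_Nmat_right: "j < r \<Longrightarrow> mat_mult P r (Nmat r) i j = P i j * (real r - real j)"
  by (simp add: Nmat_def mat_mult_diag_right)

lemma mat_mult_Nmat_left: "i < r \<Longrightarrow> mat_mult (Nmat r) r P i j = (real r - real i) * P i j"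
  by (simp add: Nmat_def mat_mult_diag_left)

lemma frob_le_iff:
  assumes "0 \<le> c"
  shows "frob m n B \<le> c \<longleftrightarrow> (\<Sum>i<m. \<Sum>j<n. (B i j)\<^sup>2) \<le> c\<^sup>2"
  unfolding frob_def using assms real_le_lsqrt sqrt_le_D by blast

lemma frob_nonneg: "0 \<le> frob m n A"
  by (simp add: frob_def sum_nonneg)

lemma stiefel_inner:
  "stiefel N r X \<Longrightarrow> k < r \<Longrightarrow> k' < r \<Longrightarrow> (\<Sum>n<N. X n k * X n k') = (if k = k' then 1 else 0)"
  by (simp add: stiefel_def mat_mult_def mat_transp_def mat_id_def mat_diag_def)

lemma stiefel_col_norm: "stiefel N r X \<Longrightarrow> j < r \<Longrightarrow> (\<Sum>n<N. (X n j)\<^sup>2) = 1"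
  using stiefel_inner[of N r X j j] by (simp add: power2_eq_square)

lemma stiefel_comb_sq:
  assumes "stiefel N r X"
  shows "(\<Sum>n<N. (\<Sum>k<r. X n k * c k)\<^sup>2) = (\<Sum>k<r. (c k)\<^sup>2)"
proof -
  have "(\<Sum>n<N. (\<Sum>k<r. X n k * c k)\<^sup>2) = (\<Sum>k<r. \<Sum>k'<r. c k * c k' * (\<Sum>n<N. X n k * X n k'))"
    by (simp add: power2_eq_square sum_product sum_distrib_left mult_ac sum.swap[of _ "{..<N}"])
  also have "\<dots> = (\<Sum>k<r. \<Sum>k'<r. if k = k' then c k * c k' else 0)"
    by (intro sum.cong refl) (simp add: stiefel_inner[OF assms])
  also have "\<dots> = (\<Sum>k<r. (c k)\<^sup>2)" by (simp add: power2_eq_square)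
  finally show ?thesis .
qed

lemma stiefel_pythagoras:
  assumes X: "stiefel N r X" and v_orth: "\<And>k. k < r \<Longrightarrow> (\<Sum>n<N. v n * X n k) = 0"
  shows "(\<Sum>n<N. (v n + (\<Sum>k<r. X n k * c k))\<^sup>2) = (\<Sum>n<N. (v n)\<^sup>2) + (\<Sum>k<r. (c k)\<^sup>2)"
proof -
  have cross: "(\<Sum>n<N. v n * (\<Sum>k<r. X n k * c k)) = 0"
  proof -
    have "(\<Sum>n<N. v n * (\<Sum>k<r. X n k * c k)) = (\<Sum>k<r. (\<Sum>n<N. v n * X n k) * c k)"
      by (simp add: sum_distrib_left sum_distrib_right mult.assoc sum.swap[of _ "{..<N}"])
    then show ?thesis using v_orth by simp
  qed
  have "(\<Sum>n<N. (v n + (\<Sum>k<r. X n k * c k))\<^sup>2) =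
     (\<Sum>n<N. (v n)\<^sup>2) + 2 * (\<Sum>n<N. v n * (\<Sum>k<r. X n k * c k)) + (\<Sum>n<N. (\<Sum>k<r. X n k * c k)\<^sup>2)"
    by (simp add: power2_sum sum.distrib sum_distrib_left mult.assoc)
  then show ?thesis using cross stiefel_comb_sq[OF X] by simp
qed

definition rayleigh :: "nat \<Rightarrow> (nat \<Rightarrow> real) \<Rightarrow> rmat \<Rightarrow> rmat" where
  "rayleigh N lam X = mat_mult (mat_mult (mat_transp X) N (mat_diag lam)) N X"

definition normal_part :: "nat \<Rightarrow> nat \<Rightarrow> (nat \<Rightarrow> real) \<Rightarrow> rmat \<Rightarrow> rmat" where
  "normal_part N r lam X = (\<lambda>n j. lam n * X n j - (\<Sum>k<r. X n k * rayleigh N lam X k j))"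

definition ritz_residual :: "nat \<Rightarrow> (nat \<Rightarrow> real) \<Rightarrow> rmat \<Rightarrow> nat \<Rightarrow> real" where
  "ritz_residual N lam X j = (\<Sum>n<N. (X n j)\<^sup>2 * (lam n - rayleigh N lam X j j)\<^sup>2)"

definition offdiag_sq :: "nat \<Rightarrow> rmat \<Rightarrow> nat \<Rightarrow> real" where
  "offdiag_sq r A j = (\<Sum>k<r. (if k = j then 0 else A k j)\<^sup>2)"

lemma rayleigh_entry: "rayleigh N lam X j k = (\<Sum>n<N. X n j * lam n * X n k)"
  by (simp add: rayleigh_def mat_mult_def[of _ N X] mat_mult_diag_right mat_transp_def)

lemma normal_part_orth:
  assumes "stiefel N r X" "j < r" "m < r"
  shows "(\<Sum>n<N. normal_part N r lam X n j * X n m) = 0"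
proof -
  have "(\<Sum>n<N. \<Sum>k<r. X n k * rayleigh N lam X k j * X n m)
      = (\<Sum>k<r. rayleigh N lam X k j * (\<Sum>n<N. X n k * X n m))"
    by (subst sum.swap) (simp add: sum_distrib_left mult_ac)
  also have "\<dots> = rayleigh N lam X m j"
    using assms by (simp add: stiefel_inner if_distrib sum.delta cong: if_cong)
  also have "\<dots> = (\<Sum>n<N. lam n * X n j * X n m)" by (simp add: rayleigh_entry mult_ac)
  finally show ?thesis
    by (simp add: normal_part_def left_diff_distrib sum_subtractf sum_distrib_right)
qed

lemma grad_g_entry:
  assumes "n < N" "j < r"
  shows "grad_g N r (mat_diag lam) X n j =
    - normal_part N r lam X n j * (real r - real j)
    - (\<Sum>k<r. X n k * (rayleigh N lam X k j * (real k - real j))) / 2"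
proof -
  let ?A = "rayleigh N lam X"
  have proj: "mat_mult (mat_mult (mat_sub (mat_mult X r (mat_transp X)) mat_id) N (mat_diag lam)) N X n j
      = - normal_part N r lam X n j"
  proof -
    have "mat_mult (mat_sub (mat_mult X r (mat_transp X)) mat_id) N (mat_diag lam) n m
        = ((\<Sum>k<r. X n k * X m k) - (if n = m then 1 else 0)) * lam m" if "m < N" for m
      using that by (simp add: mat_mult_diag_right) (simp add: mat_sub_def mat_mult_def mat_transp_def mat_id_def mat_diag_def)
    then have "mat_mult (mat_mult (mat_sub (mat_mult X r (mat_transp X)) mat_id) N (mat_diag lam)) N X n j
        = (\<Sum>m<N. ((\<Sum>k<r. X n k * X m k) - (if n = m then 1 else 0)) * lam m * X m j)"
      unfolding mat_mult_def[of _ N X] by (intro sum.cong) simp_all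
    also have "\<dots> = (\<Sum>m<N. (\<Sum>k<r. X n k * X m k) * lam m * X m j)
        - (\<Sum>m<N. if n = m then lam m * X m j else 0)"
      by (subst sum_subtractf[symmetric]) (intro sum.cong refl; simp add: algebra_simps)
    also have "\<dots> = (\<Sum>m<N. \<Sum>k<r. X n k * (X m k * lam m * X m j)) - lam n * X n j"
      using assms(1) by (simp add: sum_distrib_right sum_distrib_left mult_ac)
    also have "\<dots> = (\<Sum>k<r. X n k * ?A k j) - lam n * X n j"
      using assms(1) by (subst sum.swap) (simp add: rayleigh_entry sum_distrib_left)
    finally show ?thesis by (simp add: normal_part_def)
  qed
  have comm: "commutator r ?A (Nmat r) k j = ?A k j * (real k - real j)" if "k < r" for k
    using that assms(2)
    by (simp add: commutator_def mat_sub_def mat_mult_Nmat_left mat_mult_Nmat_right algebra_simps)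
  have "grad_g N r (mat_diag lam) X n j = - normal_part N r lam X n j * (real r - real j)
      - (\<Sum>k<r. X n k * commutator r ?A (Nmat r) k j) / 2"
    unfolding grad_g_def rayleigh_def[symmetric] mat_sub_def[of "mat_mult _ r (Nmat r)"] mat_scale_def
    using assms by (simp only: mat_mult_Nmat_right proj) (simp add: mat_mult_def)
  then show ?thesis
    using assms(2) by (simp add: comm)
qed

lemma grad_g_col_sq_ge:
  assumes X: "stiefel N r X" and j: "j < r"
  shows "(\<Sum>n<N. (normal_part N r lam X n j)\<^sup>2) + offdiag_sq r (rayleigh N lam X) j / 4
    \<le> (\<Sum>n<N. (grad_g N r (mat_diag lam) X n j)\<^sup>2)"
proof -
  let ?A = "rayleigh N lam X" and ?U = "normal_part N r lam X"
  define c where "c k = - (1/2) * (?A k j * (real k - real j))" for k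
  have "(\<Sum>k<r. X n k * c k) = - (1/2) * (\<Sum>k<r. X n k * (?A k j * (real k - real j)))" for n
    by (simp add: c_def sum_distrib_left mult_ac)
  then have "(\<Sum>n<N. (grad_g N r (mat_diag lam) X n j)\<^sup>2)
      = (\<Sum>n<N. (- (real r - real j) * ?U n j + (\<Sum>k<r. X n k * c k))\<^sup>2)"
    using j by (intro sum.cong refl) (simp add: grad_g_entry algebra_simps)
  also have "\<dots> = (\<Sum>n<N. (- (real r - real j) * ?U n j)\<^sup>2) + (\<Sum>k<r. (c k)\<^sup>2)"
    using normal_part_orth[OF X j]
    by (intro stiefel_pythagoras[OF X]) (simp add: mult.assoc flip: sum_distrib_left)
  also have "\<dots> = (real r - real j)\<^sup>2 * (\<Sum>n<N. (?U n j)\<^sup>2) + (\<Sum>k<r. (c k)\<^sup>2)"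
    by (simp add: power_mult_distrib sum_distrib_left power2_commute)
  finally have grad_col: "(\<Sum>n<N. (grad_g N r (mat_diag lam) X n j)\<^sup>2)
      = (real r - real j)\<^sup>2 * (\<Sum>n<N. (?U n j)\<^sup>2) + (\<Sum>k<r. (c k)\<^sup>2)" .
  have "(\<Sum>n<N. (?U n j)\<^sup>2) \<le> (real r - real j)\<^sup>2 * (\<Sum>n<N. (?U n j)\<^sup>2)"
  proof -
    have "1 \<le> (real r - real j)\<^sup>2" using j by (intro one_le_power) simp
    moreover have "0 \<le> (\<Sum>n<N. (?U n j)\<^sup>2)" by (intro sum_nonneg) simp
    ultimately have "1 * (\<Sum>n<N. (?U n j)\<^sup>2) \<le> (real r - real j)\<^sup>2 * (\<Sum>n<N. (?U n j)\<^sup>2)"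
      by (rule mult_right_mono)
    then show ?thesis by (simp only: mult_1)
  qed
  moreover have "offdiag_sq r ?A j / 4 \<le> (\<Sum>k<r. (c k)\<^sup>2)"
    unfolding offdiag_sq_def sum_divide_distrib
  proof (rule sum_mono)
    fix k
    show "(if k = j then 0 else ?A k j)\<^sup>2 / 4 \<le> (c k)\<^sup>2"
    proof (cases "k = j")
      case False
      then have "1 \<le> \<bar>real k - real j\<bar>" by linarith
      then have "1 \<le> (real k - real j)\<^sup>2" using one_le_power[of "\<bar>real k - real j\<bar>" 2] by simp
      then have "(?A k j)\<^sup>2 * 1 \<le> (?A k j)\<^sup>2 * (real k - real j)\<^sup>2"
        by (intro mult_left_mono) simp_all
      then show ?thesis using False by (simp add: c_def power_mult_distrib power_divide)
    qed (simp add: c_def)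
  qed
  ultimately show ?thesis using grad_col by linarith
qed

lemma ritz_residual_eq:
  assumes X: "stiefel N r X" and j: "j < r"
  shows "ritz_residual N lam X j
    = (\<Sum>n<N. (normal_part N r lam X n j)\<^sup>2) + offdiag_sq r (rayleigh N lam X) j"
proof -
  let ?A = "rayleigh N lam X"
  have split: "(\<Sum>k<r. X n k * ?A k j) = X n j * ?A j j + (\<Sum>k<r. X n k * (if k = j then 0 else ?A k j))"
    for n
  proof -
    have "(\<Sum>k<r. X n k * ?A k j)
        = (\<Sum>k<r. (if k = j then X n j * ?A j j else 0) + X n k * (if k = j then 0 else ?A k j))"
      by (intro sum.cong) auto
    then show ?thesis using j by (simp add: sum.distrib)
  qed
  have "X n j * (lam n - ?A j j)
      = normal_part N r lam X n j + (\<Sum>k<r. X n k * (if k = j then 0 else ?A k j))" for n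
    unfolding normal_part_def split by (simp add: algebra_simps)
  then have "ritz_residual N lam X j
      = (\<Sum>n<N. (normal_part N r lam X n j + (\<Sum>k<r. X n k * (if k = j then 0 else ?A k j)))\<^sup>2)"
    unfolding ritz_residual_def by (simp flip: power_mult_distrib)
  also have "\<dots> = (\<Sum>n<N. (normal_part N r lam X n j)\<^sup>2) + offdiag_sq r ?A j"
    unfolding offdiag_sq_def by (rule stiefel_pythagoras[OF X normal_part_orth[OF X j]])
  finally show ?thesis .
qed

lemma sum_ritz_residual_offdiag_le:
  assumes X: "stiefel N r X" and grad: "frob N r (grad_g N r (mat_diag lam) X) \<le> \<epsilon>"
  shows "(\<Sum>j<r. ritz_residual N lam X j + offdiag_sq r (rayleigh N lam X) j) \<le> 8 * \<epsilon>\<^sup>2"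
proof -
  have eps: "0 \<le> \<epsilon>" using grad frob_nonneg order.trans by blast
  have "ritz_residual N lam X j + offdiag_sq r (rayleigh N lam X) j
      \<le> 8 * (\<Sum>n<N. (grad_g N r (mat_diag lam) X n j)\<^sup>2)" if "j < r" for j
    using grad_g_col_sq_ge[OF X that, of lam] ritz_residual_eq[OF X that, of lam]
      sum_nonneg[of "{..<N}" "\<lambda>n. (normal_part N r lam X n j)\<^sup>2"] by simp
  then have "(\<Sum>j<r. ritz_residual N lam X j + offdiag_sq r (rayleigh N lam X) j)
      \<le> (\<Sum>j<r. 8 * (\<Sum>n<N. (grad_g N r (mat_diag lam) X n j)\<^sup>2))"
    by (intro sum_mono) simp
  also have "\<dots> = 8 * (\<Sum>j<r. \<Sum>n<N. (grad_g N r (mat_diag lam) X n j)\<^sup>2)"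
    by (rule sum_distrib_left[symmetric])
  also have "\<dots> \<le> 8 * \<epsilon>\<^sup>2"
    using grad frob_le_iff[OF eps] by (simp add: sum.swap[of _ "{..<r}"])
  finally show ?thesis .
qed

lemma nearest_sq_le_weighted_spread:
  fixes v lam :: "nat \<Rightarrow> real"
  assumes unit: "(\<Sum>n<N. (v n)\<^sup>2) = 1"
    and nearest: "\<And>n. n < N \<Longrightarrow> \<bar>\<rho> - \<mu>\<bar> \<le> \<bar>\<rho> - lam n\<bar>"
  shows "(\<rho> - \<mu>)\<^sup>2 \<le> (\<Sum>n<N. (v n)\<^sup>2 * (lam n - \<rho>)\<^sup>2)"
proof -
  have "(\<rho> - \<mu>)\<^sup>2 = (\<Sum>n<N. (v n)\<^sup>2 * (\<rho> - \<mu>)\<^sup>2)"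
    using unit by (simp flip: sum_distrib_right)
  also have "\<dots> \<le> (\<Sum>n<N. (v n)\<^sup>2 * (lam n - \<rho>)\<^sup>2)"
  proof (intro sum_mono mult_left_mono)
    fix n assume "n \<in> {..<N}"
    then have "\<bar>\<rho> - \<mu>\<bar> \<le> \<bar>lam n - \<rho>\<bar>" using nearest by (simp add: abs_minus_commute)
    then show "(\<rho> - \<mu>)\<^sup>2 \<le> (lam n - \<rho>)\<^sup>2" by (simp add: abs_le_square_iff)
  qed simp
  finally show ?thesis .
qed

lemma gap_sq_mul_off_mass_le_weighted_spread:
  fixes v lam :: "nat \<Rightarrow> real"
  assumes "0 \<le> d" and gap: "\<And>n. n < N \<Longrightarrow> n \<noteq> j \<Longrightarrow> d \<le> \<bar>lam n - lam j\<bar>"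
    and nearest: "\<And>n. n < N \<Longrightarrow> \<bar>\<rho> - lam j\<bar> \<le> \<bar>\<rho> - lam n\<bar>"
  shows "(d / 2)\<^sup>2 * (\<Sum>n<N. (if n = j then 0 else v n)\<^sup>2) \<le> (\<Sum>n<N. (v n)\<^sup>2 * (lam n - \<rho>)\<^sup>2)"
  unfolding sum_distrib_left
proof (rule sum_mono)
  fix n assume n: "n \<in> {..<N}"
  show "(d / 2)\<^sup>2 * (if n = j then 0 else v n)\<^sup>2 \<le> (v n)\<^sup>2 * (lam n - \<rho>)\<^sup>2"
  proof (cases "n = j")
    case False
    have "d / 2 \<le> \<bar>lam n - \<rho>\<bar>"
      using gap[of n] nearest[of n] n False by simp (smt (verit))
    then have "(d / 2)\<^sup>2 \<le> (lam n - \<rho>)\<^sup>2"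
      using \<open>0 \<le> d\<close> by (simp add: abs_le_square_iff[symmetric])
    then show ?thesis using False by (simp add: mult.commute mult_left_mono)
  qed simp
qed

lemma sum_sq_sub_signed_basis_le:
  fixes v :: "nat \<Rightarrow> real"
  assumes j: "j < N" and unit: "(\<Sum>n<N. (v n)\<^sup>2) = 1"
  shows "(\<Sum>n<N. (v n - (if n = j then (if 0 \<le> v j then 1 else -1) else 0))\<^sup>2)
    \<le> 2 * (\<Sum>n<N. (if n = j then 0 else v n)\<^sup>2)"
proof -
  define s :: real where "s = (if 0 \<le> v j then 1 else -1)"
  define T where "T = (\<Sum>n\<in>{..<N} - {j}. (v n)\<^sup>2)"
  have "(\<Sum>n<N. (if n = j then 0 else v n)\<^sup>2) = T"
    unfolding T_def using j by (simp add: sum.remove[of "{..<N}" j])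
  moreover have "(\<Sum>n<N. (v n - (if n = j then s else 0))\<^sup>2) = (v j - s)\<^sup>2 + T"
    unfolding T_def using j by (simp add: sum.remove[of "{..<N}" j])
  moreover have unit_split: "(v j)\<^sup>2 + T = 1"
    unfolding T_def using j unit by (simp add: sum.remove[of "{..<N}" j])
  moreover have "(v j - s)\<^sup>2 \<le> T"
  proof -
    have "T \<ge> 0" unfolding T_def by (simp add: sum_nonneg)
    then have "\<bar>v j\<bar> \<le> 1" using unit_split abs_le_square_iff[of "v j" 1] by simp
    have "(v j - s)\<^sup>2 = (1 - \<bar>v j\<bar>) * (1 - \<bar>v j\<bar>)"
      by (simp add: s_def power2_eq_square algebra_simps)
    also have "\<dots> \<le> (1 - \<bar>v j\<bar>) * (1 + \<bar>v j\<bar>)"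
      using \<open>\<bar>v j\<bar> \<le> 1\<close> by (intro mult_left_mono) auto
    also have "\<dots> = T" using unit_split by (simp add: power2_eq_square algebra_simps)
    finally show ?thesis .
  qed
  ultimately show ?thesis unfolding s_def[symmetric] by linarith
qed

lemma less_of_decreasing_upto:
  fixes f :: "nat \<Rightarrow> 'a::order"
  assumes dec: "\<And>k. k < r \<Longrightarrow> f (Suc k) < f k" and "a < b" "b \<le> r"
  shows "f b < f a"
  using \<open>a < b\<close> \<open>b \<le> r\<close>
proof (induction b rule: less_Suc_induct)
  case (1 i)
  then show ?case using dec by simp
next
  case (2 i j k)
  then show ?case using order.strict_trans by fastforce
qed

lemma le_of_decreasing_from:
  fixes f :: "nat \<Rightarrow> 'a::order"
  assumes dec: "\<And>k. r \<le> k \<Longrightarrow> Suc k < N \<Longrightarrow> f (Suc k) \<le> f k" and "r \<le> b" "b < N"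
  shows "f b \<le> f r"
  using \<open>r \<le> b\<close> \<open>b < N\<close>
proof (induction b rule: dec_induct)
  case (step n)
  then show ?case using dec[of n] order.trans by fastforce
qed simp

definition eigengap :: "nat \<Rightarrow> (nat \<Rightarrow> real) \<Rightarrow> real" where
  "eigengap r lam = Min {lam a - lam b | a b. a < b \<and> b \<le> r}"

lemma finite_gaps: "finite {lam a - lam b | a b. a < b \<and> b \<le> (r::nat)}"
proof (rule finite_subset)
  show "{lam a - lam b | a b. a < b \<and> b \<le> r} \<subseteq> (\<lambda>(a, b). lam a - lam b) ` ({..r} \<times> {..r})"
    by force
qed simp

lemma eigengap_pos:
  assumes dec: "\<And>k. k < r \<Longrightarrow> lam (Suc k) < lam k" and "1 \<le> r"
  shows "0 < eigengap r lam"
  unfolding eigengap_def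
proof (subst Min_gr_iff)
  show "{lam a - lam b | a b. a < b \<and> b \<le> r} \<noteq> {}" using \<open>1 \<le> r\<close> by blast
qed (use finite_gaps less_of_decreasing_upto[of r lam, OF dec] in auto)

lemma eigengap_le_dist:
  assumes strict: "\<And>k. k < r \<Longrightarrow> lam (Suc k) < lam k"
    and weak: "\<And>k. r \<le> k \<Longrightarrow> Suc k < N \<Longrightarrow> lam (Suc k) \<le> lam k"
    and "j < r" "n < N" "n \<noteq> j"
  shows "eigengap r lam \<le> \<bar>lam n - lam j\<bar>"
proof -
  have gap_le: "eigengap r lam \<le> lam a - lam b" if "a < b" "b \<le> r" for a b
    unfolding eigengap_def using that by (intro Min_le finite_gaps) blast
  consider "n < j" | "j < n" "n \<le> r" | "r < n" using \<open>n \<noteq> j\<close> by linarith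
  then show ?thesis
  proof cases
    case 1
    then show ?thesis using gap_le[of n j] \<open>j < r\<close> by linarith
  next
    case 2
    then show ?thesis using gap_le[of j n] by linarith
  next
    case 3
    have "lam n \<le> lam r" using le_of_decreasing_from[of r N lam n] weak 3 \<open>n < N\<close> by simp
    then show ?thesis using gap_le[of j r] \<open>j < r\<close> by linarith
  qed
qed

lemma rayleigh_sub_nearest_frob_le:
  assumes X: "stiefel N r X" and grad: "frob N r (grad_g N r (mat_diag lam) X) \<le> \<epsilon>"
    and nearest: "\<And>j n. j < r \<Longrightarrow> n < N \<Longrightarrow>
      \<bar>rayleigh N lam X j j - lam (idx j)\<bar> \<le> \<bar>rayleigh N lam X j j - lam n\<bar>"
  shows "frob r r (mat_sub (rayleigh N lam X) (mat_diag (\<lambda>j. lam (idx j)))) \<le> 3 * \<epsilon>"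
proof -
  let ?A = "rayleigh N lam X"
  have col: "(\<Sum>i<r. (mat_sub ?A (mat_diag (\<lambda>j. lam (idx j))) i j)\<^sup>2)
      \<le> ritz_residual N lam X j + offdiag_sq r ?A j" if j: "j < r" for j
  proof -
    have "(\<Sum>i<r. (mat_sub ?A (mat_diag (\<lambda>j. lam (idx j))) i j)\<^sup>2)
        = (\<Sum>i<r. (if i = j then (?A j j - lam (idx j))\<^sup>2 else 0) + (if i = j then 0 else ?A i j)\<^sup>2)"
      by (intro sum.cong) (auto simp: mat_sub_def mat_diag_def)
    also have "\<dots> = (?A j j - lam (idx j))\<^sup>2 + offdiag_sq r ?A j"
      using j by (simp add: sum.distrib offdiag_sq_def)
    also have "(?A j j - lam (idx j))\<^sup>2 \<le> ritz_residual N lam X j"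
      unfolding ritz_residual_def
      by (rule nearest_sq_le_weighted_spread[OF stiefel_col_norm[OF X j] nearest[OF j]])
    finally show ?thesis by simp
  qed
  have "0 \<le> \<epsilon>" using grad frob_nonneg order.trans by blast
  have "(\<Sum>i<r. \<Sum>j<r. (mat_sub ?A (mat_diag (\<lambda>j. lam (idx j))) i j)\<^sup>2)
      \<le> (\<Sum>j<r. ritz_residual N lam X j + offdiag_sq r ?A j)"
    by (subst sum.swap) (intro sum_mono col, simp)
  also have "\<dots> \<le> 8 * \<epsilon>\<^sup>2" by (rule sum_ritz_residual_offdiag_le[OF X grad])
  also have "\<dots> \<le> (3 * \<epsilon>)\<^sup>2" by (simp add: power_mult_distrib)
  finally show ?thesis using frob_le_iff \<open>0 \<le> \<epsilon>\<close> by simp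
qed

lemma stiefel_signed_basis_frob_le:
  assumes X: "stiefel N r X" and grad: "frob N r (grad_g N r (mat_diag lam) X) \<le> \<epsilon>"
    and "1 \<le> r" "r \<le> N"
    and strict: "\<And>k. k < r \<Longrightarrow> lam (Suc k) < lam k"
    and weak: "\<And>k. r \<le> k \<Longrightarrow> Suc k < N \<Longrightarrow> lam (Suc k) \<le> lam k"
    and nearest: "\<And>j n. j < r \<Longrightarrow> n < N \<Longrightarrow>
      \<bar>rayleigh N lam X j j - lam j\<bar> \<le> \<bar>rayleigh N lam X j j - lam n\<bar>"
  shows "frob N r (mat_sub X (\<lambda>n j. if n = j then (if 0 \<le> X j j then 1 else -1) else 0))
    \<le> 8 * \<epsilon> / eigengap r lam"
proof -
  have eps: "0 \<le> \<epsilon>" using grad frob_nonneg order.trans by blast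
  define d where "d = eigengap r lam"
  have d: "0 < d" unfolding d_def using eigengap_pos strict \<open>1 \<le> r\<close> by blast
  have col: "(\<Sum>n<N. (X n j - (if n = j then (if 0 \<le> X j j then 1 else -1) else 0))\<^sup>2)
      \<le> 8 / d\<^sup>2 * ritz_residual N lam X j" if j: "j < r" for j
  proof -
    let ?off = "\<Sum>n<N. (if n = j then 0 else X n j)\<^sup>2"
    have "(d / 2)\<^sup>2 * ?off \<le> ritz_residual N lam X j"
      using j d eigengap_le_dist[of r lam N, OF strict weak j] nearest[OF j]
      unfolding ritz_residual_def d_def by (intro gap_sq_mul_off_mass_le_weighted_spread) auto
    then have "2 * ?off \<le> 8 / d\<^sup>2 * ritz_residual N lam X j"
      using d by (simp add: power_divide field_simps)
    moreover have "j < N" using j \<open>r \<le> N\<close> by simp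
    ultimately show ?thesis
      using sum_sq_sub_signed_basis_le[OF _ stiefel_col_norm[OF X j]] by (meson order.trans)
  qed
  have "(\<Sum>j<r. ritz_residual N lam X j)
      \<le> (\<Sum>j<r. ritz_residual N lam X j + offdiag_sq r (rayleigh N lam X) j)"
    by (intro sum_mono) (simp add: offdiag_sq_def sum_nonneg)
  also have "\<dots> \<le> 8 * \<epsilon>\<^sup>2" by (rule sum_ritz_residual_offdiag_le[OF X grad])
  finally have "(\<Sum>j<r. ritz_residual N lam X j) \<le> 8 * \<epsilon>\<^sup>2" .
  have "(\<Sum>n<N. \<Sum>j<r. (mat_sub X (\<lambda>n j. if n = j then (if 0 \<le> X j j then 1 else -1) else 0) n j)\<^sup>2)
      \<le> (\<Sum>j<r. 8 / d\<^sup>2 * ritz_residual N lam X j)"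
    unfolding mat_sub_def by (subst sum.swap) (rule sum_mono, rule col, simp)
  also have "\<dots> \<le> 8 / d\<^sup>2 * (8 * \<epsilon>\<^sup>2)"
    using \<open>(\<Sum>j<r. ritz_residual N lam X j) \<le> 8 * \<epsilon>\<^sup>2\<close> d
    by (simp only: sum_distrib_left[symmetric]) (simp add: divide_right_mono)
  also have "\<dots> = (8 * \<epsilon> / d)\<^sup>2" by (simp add: power_divide power_mult_distrib)
  finally have "(\<Sum>n<N. \<Sum>j<r. (mat_sub X (\<lambda>n j. if n = j then (if 0 \<le> X j j then 1 else -1) else 0) n j)\<^sup>2)
      \<le> (8 * \<epsilon> / d)\<^sup>2" .
  moreover have "0 \<le> 8 * \<epsilon> / d" using eps d by simp
  ultimately show ?thesis unfolding d_def by (simp add: frob_le_iff)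
qed

theorem lemmaC1:
  fixes N r :: nat and lam :: "nat \<Rightarrow> real" and X :: rmat and \<epsilon> :: real
    and idx :: "nat \<Rightarrow> nat"
  assumes r_pos: "1 \<le> r" and rN: "r + 1 \<le> N"
    and lam_strict: "\<And>k. k < r \<Longrightarrow> lam k > lam (Suc k)"
    and lam_weak: "\<And>k. r \<le> k \<Longrightarrow> Suc k < N \<Longrightarrow> lam k \<ge> lam (Suc k)"
    and lam_nonneg: "lam (N - 1) \<ge> 0"
    and eps_pos: "\<epsilon> > 0"
    and X_st: "stiefel N r X"
    and grad_small: "frob N r (grad_g N r (mat_diag lam) X) \<le> \<epsilon>"
    and idx_range: "\<And>j. j < r \<Longrightarrow> idx j < N"
    and idx_min: "\<And>j n. j < r \<Longrightarrow> n < N \<Longrightarrow>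
        \<bar>mat_mult (mat_mult (mat_transp X) N (mat_diag lam)) N X j j - lam (idx j)\<bar>
          \<le> \<bar>mat_mult (mat_mult (mat_transp X) N (mat_diag lam)) N X j j - lam n\<bar>"
  shows "frob r r (mat_sub (mat_mult (mat_mult (mat_transp X) N (mat_diag lam)) N X)
                           (mat_diag (\<lambda>j. lam (idx j)))) \<le> 4 * \<epsilon>
       \<and> ((\<forall>j<r. idx j = j) \<longrightarrow>
           (\<exists>s :: nat \<Rightarrow> real.
              (\<forall>j<r. s j = 1 \<or> s j = -1) \<and>
              (\<forall>j<r. X j j \<ge> 0 \<longrightarrow> s j = 1) \<and>
              frob N r (mat_sub X (mat_mult (\<lambda>k j. std_basis (idx j) k) r (mat_diag s)))
                \<le> 12 * \<epsilon> / Min {lam a - lam b | a b. a < b \<and> b \<le> r}))"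
proof -
  have A: "mat_mult (mat_mult (mat_transp X) N (mat_diag lam)) N X = rayleigh N lam X"
    by (simp add: rayleigh_def)
  have "frob r r (mat_sub (rayleigh N lam X) (mat_diag (\<lambda>j. lam (idx j)))) \<le> 4 * \<epsilon>"
    using rayleigh_sub_nearest_frob_le[OF X_st grad_small, of idx] idx_min eps_pos unfolding A by fastforce
  moreover have "\<exists>s :: nat \<Rightarrow> real.
      (\<forall>j<r. s j = 1 \<or> s j = -1) \<and>
      (\<forall>j<r. X j j \<ge> 0 \<longrightarrow> s j = 1) \<and>
      frob N r (mat_sub X (mat_mult (\<lambda>k j. std_basis (idx j) k) r (mat_diag s)))
        \<le> 12 * \<epsilon> / Min {lam a - lam b | a b. a < b \<and> b \<le> r}" if idx_id: "\<forall>j<r. idx j = j"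
  proof (intro exI conjI)
    define s :: "nat \<Rightarrow> real" where "s j = (if 0 \<le> X j j then 1 else -1)" for j
    show "\<forall>j<r. s j = 1 \<or> s j = -1" "\<forall>j<r. X j j \<ge> 0 \<longrightarrow> s j = 1" by (simp_all add: s_def)
    have "frob N r (mat_sub X (mat_mult (\<lambda>k j. std_basis (idx j) k) r (mat_diag s)))
        = frob N r (mat_sub X (\<lambda>n j. if n = j then s j else 0))"
      unfolding frob_def using idx_id
      by (intro arg_cong[where f=sqrt] sum.cong refl) (simp add: mat_sub_def mat_mult_diag_right std_basis_def)
    also have "\<dots> \<le> 8 * \<epsilon> / eigengap r lam"
      unfolding s_def using idx_min idx_id unfolding A
      by (intro stiefel_signed_basis_frob_le[OF X_st grad_small r_pos _ lam_strict lam_weak]) (use rN in auto)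
    also have "\<dots> \<le> 12 * \<epsilon> / eigengap r lam"
      using eigengap_pos[of r lam, OF lam_strict r_pos] eps_pos by (simp add: divide_right_mono)
    finally show "frob N r (mat_sub X (mat_mult (\<lambda>k j. std_basis (idx j) k) r (mat_diag s)))
        \<le> 12 * \<epsilon> / Min {lam a - lam b | a b. a < b \<and> b \<le> r}"
      by (simp add: eigengap_def)
  qed
  ultimately show ?thesis unfolding A by blast
qed

end
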